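(* Let $N\in\mathbb N$ (with $N\ge 2$ when $R_N=D_N$), $r>0$, $0<t_\ast<\infty$ and $t\in(0,t_\ast)$. For all $j,k\in\{1,\dots,N\}$, \[ \int_0^{2\pi r}\overline{M^{A_N}_j(x,t_\ast-t)}\,M^{A_N}_k(x,t)\,dx=m^{A_N}_j(t_\ast)\,\delta_{jk}, \] and, for $R_N\in\{B_N,B_N^\vee,C_N,C_N^\vee,BC_N,D_N\}$, \[ \int_0^{\pi r}\overline{M^{R_N}_j(x,t_\ast-t)}\,M^{R_N}_k(x,t)\,dx=m^{R_N}_j(t_\ast)\,\delta_{jk}, \] where the constants $m^{R_N}_j(t_\ast)$ are: for $R_N\in\{A_N,C_N,C_N^\vee,BC_N\}$, $m^{R_N}_j(t_\ast)=2\pi r\,\vartheta_2\big(\mathcal N^{R_N}J^{R_N}(j)\tau(t_\ast);(\mathcal N^{R_N})^2\tau(t_\ast)\big)$ for all $j$; for $R_N\in\{B_N,B_N^\vee\}$, $m^{R_N}_1(t_\ast)=4\pi r\,\vartheta_2\big(0;(\mathcal N^{R_N})^2\tau(t_\ast)\big)$ and $m^{R_N}_j(t_\ast)=2\pi r\,\vartheta_2\big(\mathcal N^{R_N}J^{R_N}(j)\tau(t_\ast);(\mathcal N^{R_N})^2\tau(t_\ast)\big)$ for $2\le j\le N$; for $D_N$, $m^{D_N}_1(t_\ast)=4\pi r\,\vartheta_2\big(0;(\mathcal N^{D_N})^2\tau(t_\ast)\big)$, $m^{D_N}_j(t_\ast)=2\pi r\,\vartheta_2\big(\mathcal N^{D_N}J^{D_N}(j)\tau(t_\ast);(\mathcal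 N^{D_N})^2\tau(t_\ast)\big)$ for $2\le j\le N-1$, and $m^{D_N}_N(t_\ast)=4\pi r\,\vartheta_2\big(\mathcal N^{D_N}(N-1)\tau(t_\ast);(\mathcal N^{D_N})^2\tau(t_\ast)\big)$.
   Context: Jacobi theta functions: for $v\in\mathbb C$, $\tau\in\mathbb H=\{\tau\in\mathbb C:\Im\tau>0\}$, with $z=e^{\pi i v}$, $q=e^{\pi i\tau}$, set $\vartheta_0(v;\tau)=\sum_{n\in\mathbb Z}(-1)^nq^{n^2}z^{2n}$, $\vartheta_1(v;\tau)=i\sum_{n\in\mathbb Z}(-1)^nq^{(n-1/2)^2}z^{2n-1}$, $\vartheta_2(v;\tau)=\sum_{n\in\mathbb Z}q^{(n-1/2)^2}z^{2n-1}$, $\vartheta_3(v;\tau)=\sum_{n\in\mathbb Z}q^{n^2}z^{2n}$. For $\sigma\in\mathbb R$, $z\in\mathbb C$, $\tau\in\mathbb H$ define $\Theta^A(\sigma,z,\tau)=e^{2\pi i\sigma z}\vartheta_2(\sigma\tau+z;\tau)$, $\Theta^B(\sigma,z,\tau)=e^{2\pi i\sigma z}\vartheta_1(\sigma\tau+z;\tau)-e^{-2\pi i\sigma z}\vartheta_1(\sigma\tau-z;\tau)$, $\Theta^C(\sigma,z,\tau)=e^{2\pi i\sigma z}\vartheta_2(\sigma\tau+z;\tau)-e^{-2\pi i\sigma z}\vartheta_2(\sigma\tau-z;\tau)$, $\Theta^D(\sigma,z,\tau)=e^{2\pi i\sigma z}\vartheta_2(\sigma\tau+z;\tau)+e^{-2\pi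 i\sigma z}\vartheta_2(\sigma\tau-z;\tau)$. The symbol $R_N$ ranges over the seven types $A_N,B_N,B_N^\vee,C_N,C_N^\vee,BC_N,D_N$. Set $\sharp(R_N)=A$ for $A_N$; $=B$ for $B_N,B_N^\vee$; $=C$ for $C_N,C_N^\vee,BC_N$; $=D$ for $D_N$. Set $J^{R_N}(j)=j-1/2$ for $A_N,C_N^\vee$; $=j-1$ for $B_N,B_N^\vee,D_N$; $=j$ for $C_N,BC_N$. Set $\mathcal N^{A_N}=N$, $\mathcal N^{B_N}=2N-1$, $\mathcal N^{B_N^\vee}=\mathcal N^{C_N^\vee}=2N$, $\mathcal N^{C_N}=2(N+1)$, $\mathcal N^{BC_N}=2N+1$, $\mathcal N^{D_N}=2(N-1)$. Fix $r>0$ and put $\xi(x)=x/(2\pi r)$, $\tau(t)=it/(2\pi r^2)$. For $x\in\mathbb R$, $t>0$, $j=1,\dots,N$, define $M^{R_N}_j(x,t)=\Theta^{\sharp(R_N)}\big(J^{R_N}(j)/\mathcal N^{R_N},\ \mathcal N^{R_N}\xi(x),\ (\mathcal N^{R_N})^2\tau(t)\big)$. The overline denotes complex conjugation. *)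

theory Defs
  imports "HOL-Analysis.Analysis"
begin

text \<open>Jacobi theta functions, with z = exp(pi i v), q = exp(pi i tau), and
  q^a read as exp(pi i tau a). Sums over all integers n.\<close>

definition theta1 :: "complex \<Rightarrow> complex \<Rightarrow> complex" where
  "theta1 v tau = \<i> * (\<Sum>\<^sub>\<infinity>n::int.
      (if even n then 1 else -1) * exp (pi * \<i> * tau * (of_int n - 1/2)^2)
        * exp (pi * \<i> * v * (2 * of_int n - 1)))"

definition theta2 :: "complex \<Rightarrow> complex \<Rightarrow> complex" where
  "theta2 v tau = (\<Sum>\<^sub>\<infinity>n::int.
      exp (pi * \<i> * tau * (of_int n - 1/2)^2) * exp (pi * \<i> * v * (2 * of_int n - 1)))"

definition ThetaA :: "real \<Rightarrow> complex \<Rightarrow> complex \<Rightarrow> complex" where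
  "ThetaA \<sigma> z tau = exp (2 * pi * \<i> * \<sigma> * z) * theta2 (\<sigma> * tau + z) tau"

definition ThetaB :: "real \<Rightarrow> complex \<Rightarrow> complex \<Rightarrow> complex" where
  "ThetaB \<sigma> z tau = exp (2 * pi * \<i> * \<sigma> * z) * theta1 (\<sigma> * tau + z) tau
                     - exp (- 2 * pi * \<i> * \<sigma> * z) * theta1 (\<sigma> * tau - z) tau"

definition ThetaC :: "real \<Rightarrow> complex \<Rightarrow> complex \<Rightarrow> complex" where
  "ThetaC \<sigma> z tau = exp (2 * pi * \<i> * \<sigma> * z) * theta2 (\<sigma> * tau + z) tau
                     - exp (- 2 * pi * \<i> * \<sigma> * z) * theta2 (\<sigma> * tau - z) tau"

definition ThetaD :: "real \<Rightarrow> complex \<Rightarrow> complex \<Rightarrow> complex" where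
  "ThetaD \<sigma> z tau = exp (2 * pi * \<i> * \<sigma> * z) * theta2 (\<sigma> * tau + z) tau
                     + exp (- 2 * pi * \<i> * \<sigma> * z) * theta2 (\<sigma> * tau - z) tau"

datatype rtype = RA | RB | RBv | RC | RCv | RBC | RD

datatype sharp_type = SA | SB | SC | SD

fun sharp :: "rtype \<Rightarrow> sharp_type" where
  "sharp RA = SA" | "sharp RB = SB" | "sharp RBv = SB"
| "sharp RC = SC" | "sharp RCv = SC" | "sharp RBC = SC" | "sharp RD = SD"

fun Theta_of :: "sharp_type \<Rightarrow> real \<Rightarrow> complex \<Rightarrow> complex \<Rightarrow> complex" where
  "Theta_of SA = ThetaA" | "Theta_of SB = ThetaB"
| "Theta_of SC = ThetaC" | "Theta_of SD = ThetaD"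

fun Jfun :: "rtype \<Rightarrow> nat \<Rightarrow> real" where
  "Jfun RA j = real j - 1/2" | "Jfun RCv j = real j - 1/2"
| "Jfun RB j = real j - 1" | "Jfun RBv j = real j - 1" | "Jfun RD j = real j - 1"
| "Jfun RC j = real j" | "Jfun RBC j = real j"

fun Ncal :: "rtype \<Rightarrow> nat \<Rightarrow> real" where
  "Ncal RA N = real N"
| "Ncal RB N = 2 * real N - 1"
| "Ncal RBv N = 2 * real N"
| "Ncal RCv N = 2 * real N"
| "Ncal RC N = 2 * (real N + 1)"
| "Ncal RBC N = 2 * real N + 1"
| "Ncal RD N = 2 * (real N - 1)"

definition xi :: "real \<Rightarrow> real \<Rightarrow> real" where
  "xi r x = x / (2 * pi * r)"

definition tauf :: "real \<Rightarrow> real \<Rightarrow> complex" where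
  "tauf r t = \<i> * t / (2 * pi * r^2)"

definition M :: "rtype \<Rightarrow> nat \<Rightarrow> real \<Rightarrow> nat \<Rightarrow> real \<Rightarrow> real \<Rightarrow> complex" where
  "M R N r j x t = Theta_of (sharp R) (Jfun R j / Ncal R N)
      (of_real (Ncal R N * xi r x)) ((of_real (Ncal R N))^2 * tauf r t)"

definition mconst :: "rtype \<Rightarrow> nat \<Rightarrow> real \<Rightarrow> nat \<Rightarrow> real \<Rightarrow> complex" where
  "mconst R N r j ts =
     (let n = Ncal R N; tt = (of_real n)^2 * tauf r ts;
          generic = 2 * pi * r * theta2 (of_real (n * Jfun R j) * tauf r ts) tt
      in if R \<in> {RB, RBv, RD} \<and> j = 1 then 4 * pi * r * theta2 0 tt
         else if R = RD \<and> j = N then 4 * pi * r * theta2 (of_real (n * (real N - 1)) * tauf r ts) tt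
         else generic)"

definition Lint :: "rtype \<Rightarrow> real \<Rightarrow> real" where
  "Lint R r = (if R = RA then 2 * pi * r else pi * r)"

end

(*
  At tau = i kappa every M_j is an absolutely convergent Fourier series in x.  Up to the sign
  i (-1)^m coming from theta_1, its coefficients are the Gaussians
  theta_coeff sigma kappa m = exp (- pi kappa ((m - 1/2 + sigma)^2 - sigma^2)) with sigma = J / n,
  and its waves are e^(i w_m x) for type A and e^(i w_m x) + s e^(- i w_m x) otherwise
  (s = -1 for B and C, s = 1 for D), at the frequencies w_m = (n (m - 1/2) + J) / r.
  Integrating the product of two such series term by term over [0, 2 pi r] resp. [0, pi r],
  only pairs of equal or opposite frequencies survive.  Equal frequencies force j = k and m' = m;
  opposite ones occur only for J = 0 (m' = 1 - m) or 2 J = n (m' = - m), that is for j = 1 in the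
  types B, B^vee, D and for j = N in type D, where they double the constant.  Finally the
  Gaussians multiply as theta_coeff sigma kappa1 * theta_coeff sigma kappa2
  = theta_coeff sigma (kappa1 + kappa2), so what survives is theta_2 at time (t_* - t) + t = t_*.
*)

theory Submission
  imports Defs
begin

lemma has_sum_integral_infsum:
  fixes f :: "'i \<Rightarrow> real \<Rightarrow> 'c::banach"
  assumes cont: "\<And>i. continuous_on {a..b} (f i)"
    and bound: "\<And>i x. x \<in> {a..b} \<Longrightarrow> norm (f i x) \<le> B i"
    and summable: "B summable_on UNIV"
  shows "((\<lambda>i. integral {a..b} (f i)) has_sum integral {a..b} (\<lambda>x. \<Sum>\<^sub>\<infinity>i. f i x)) UNIV"
proof -
  have "uniform_limit {a..b} (\<lambda>X x. \<Sum>i\<in>X. f i x) (\<lambda>x. \<Sum>\<^sub>\<infinity>i. f i x) (finite_subsets_at_top UNIV)"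
    using bound summable by (intro Weierstrass_m_test_general) auto
  moreover have "continuous_on {a..b} (\<lambda>x. \<Sum>i\<in>X. f i x)" for X
    using cont by (intro continuous_on_sum) auto
  ultimately obtain I J where I: "\<And>X. ((\<lambda>x. \<Sum>i\<in>X. f i x) has_integral I X) {a..b}"
    and J: "((\<lambda>x. \<Sum>\<^sub>\<infinity>i. f i x) has_integral J) {a..b}" and lim: "(I \<longlongrightarrow> J) (finite_subsets_at_top UNIV)"
    using uniform_limit_integral finite_subsets_at_top_neq_bot by metis
  have "I X = (\<Sum>i\<in>X. integral {a..b} (f i))" for X
  proof (cases "finite X")
    case True
    have "I X = integral {a..b} (\<lambda>x. \<Sum>i\<in>X. f i x)"
      using I[of X] by (simp add: integral_unique)
    also have "\<dots> = (\<Sum>i\<in>X. integral {a..b} (f i))"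
      using True cont by (simp add: integral_sum integrable_continuous_interval)
    finally show ?thesis .
  next
    case False
    then show ?thesis using I[of X] by (simp add: has_integral_0_eq)
  qed
  then have "I = sum (\<lambda>i. integral {a..b} (f i))"
    by (simp add: fun_eq_iff)
  with lim J show ?thesis
    by (simp add: has_sum_def integral_unique)
qed

lemma infsum_mult_infsum:
  fixes a :: "'i \<Rightarrow> complex" and b :: "'j \<Rightarrow> complex"
  assumes a: "a summable_on UNIV" and b: "b summable_on UNIV"
  shows "(\<lambda>(i, j). a i * b j) summable_on UNIV"
    and "(\<Sum>\<^sub>\<infinity>i. a i) * (\<Sum>\<^sub>\<infinity>j. b j) = (\<Sum>\<^sub>\<infinity>(i, j). a i * b j)"
proof -
  have "(\<lambda>(i, j). norm (a i) * norm (b j)) summable_on UNIV \<times> UNIV"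
    using a b unfolding summable_on_iff_abs_summable_on_complex
    by (intro summable_on_SigmaI[where g = "\<lambda>i. norm (a i) * (\<Sum>\<^sub>\<infinity>j. norm (b j))"])
       (auto intro: has_sum_cmult_right summable_on_cmult_left)
  then show sum: "(\<lambda>(i, j). a i * b j) summable_on UNIV"
    by (simp add: summable_on_iff_abs_summable_on_complex split_def norm_mult)
  have "(\<Sum>\<^sub>\<infinity>(i, j). a i * b j) = (\<Sum>\<^sub>\<infinity>i. \<Sum>\<^sub>\<infinity>j. a i * b j)"
    using sum by (simp add: infsum_Sigma'_banach)
  also have "\<dots> = (\<Sum>\<^sub>\<infinity>i. a i) * (\<Sum>\<^sub>\<infinity>j. b j)"
    by (simp add: infsum_cmult_right' infsum_cmult_left')
  finally show "(\<Sum>\<^sub>\<infinity>i. a i) * (\<Sum>\<^sub>\<infinity>j. b j) = (\<Sum>\<^sub>\<infinity>(i, j). a i * b j)" ..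
qed

lemma summable_on_mult_bounded:
  fixes f g :: "'i \<Rightarrow> complex"
  assumes "f summable_on A" and "\<And>i. i \<in> A \<Longrightarrow> norm (g i) \<le> C"
  shows "(\<lambda>i. f i * g i) summable_on A"
proof -
  have "(\<lambda>i. C * norm (f i)) summable_on A"
    using assms(1) by (intro summable_on_cmult_right) (simp add: summable_on_iff_abs_summable_on_complex)
  moreover have "norm (f i * g i) \<le> C * norm (f i)" if "i \<in> A" for i
    using mult_left_mono[OF assms(2)[OF that] norm_ge_zero[of "f i"]] by (simp add: norm_mult mult.commute)
  ultimately have "(\<lambda>i. norm (f i * g i)) summable_on A"
    by (rule Infinite_Sum.abs_summable_on_comparison_test')
  then show ?thesis
    by (simp add: summable_on_iff_abs_summable_on_complex)
qed

lemma cnj_infsum_mult_infsum: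
  fixes \<alpha> :: "'i \<Rightarrow> complex" and \<beta> :: "'j \<Rightarrow> complex" and u :: "'i \<Rightarrow> complex" and v :: "'j \<Rightarrow> complex"
  assumes "\<alpha> summable_on UNIV" and "\<beta> summable_on UNIV"
    and "\<And>i. norm (u i) \<le> C" and "\<And>j. norm (v j) \<le> C"
  shows "cnj (\<Sum>\<^sub>\<infinity>i. \<alpha> i * u i) * (\<Sum>\<^sub>\<infinity>j. \<beta> j * v j) = (\<Sum>\<^sub>\<infinity>(i, j). cnj (\<alpha> i) * \<beta> j * (cnj (u i) * v j))"
proof -
  have "(\<lambda>i. \<alpha> i * u i) summable_on UNIV" and "(\<lambda>j. \<beta> j * v j) summable_on UNIV"
    using assms by (auto intro: summable_on_mult_bounded)
  then have "(\<Sum>\<^sub>\<infinity>i. cnj (\<alpha> i * u i)) * (\<Sum>\<^sub>\<infinity>j. \<beta> j * v j) = (\<Sum>\<^sub>\<infinity>(i, j). cnj (\<alpha> i * u i) * (\<beta> j * v j))"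
    by (intro infsum_mult_infsum(2)) (simp_all only: summable_on_cnj_iff)
  also have "\<dots> = (\<Sum>\<^sub>\<infinity>(i, j). cnj (\<alpha> i) * \<beta> j * (cnj (u i) * v j))"
    by (simp only: complex_cnj_mult ac_simps)
  finally show ?thesis
    by (simp only: infsum_cnj)
qed

lemma integral_cnj_infsum_mult_infsum:
  fixes \<alpha> :: "'i \<Rightarrow> complex" and \<beta> :: "'j \<Rightarrow> complex"
    and u :: "'i \<Rightarrow> real \<Rightarrow> complex" and v :: "'j \<Rightarrow> real \<Rightarrow> complex"
  assumes \<alpha>: "\<alpha> summable_on UNIV" and \<beta>: "\<beta> summable_on UNIV"
    and cont_u: "\<And>i. continuous_on {a..b} (u i)" and cont_v: "\<And>j. continuous_on {a..b} (v j)"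
    and bound_u: "\<And>i x. x \<in> {a..b} \<Longrightarrow> norm (u i x) \<le> C"
    and bound_v: "\<And>j x. x \<in> {a..b} \<Longrightarrow> norm (v j x) \<le> C"
  shows "integral {a..b} (\<lambda>x. cnj (\<Sum>\<^sub>\<infinity>i. \<alpha> i * u i x) * (\<Sum>\<^sub>\<infinity>j. \<beta> j * v j x))
       = (\<Sum>\<^sub>\<infinity>(i, j). cnj (\<alpha> i) * \<beta> j * integral {a..b} (\<lambda>x. cnj (u i x) * v j x))"
proof -
  define f where "f p x = cnj (\<alpha> (fst p)) * \<beta> (snd p) * (cnj (u (fst p) x) * v (snd p) x)" for p x
  have "(\<lambda>(i, j). cnj (\<alpha> i) * \<beta> j) summable_on UNIV"
    using \<alpha> \<beta> by (intro infsum_mult_infsum(1)) (simp_all add: summable_on_cnj_iff)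
  then have "(\<lambda>p. C\<^sup>2 * norm (cnj (\<alpha> (fst p)) * \<beta> (snd p))) summable_on UNIV"
    by (intro summable_on_cmult_right) (simp add: summable_on_iff_abs_summable_on_complex split_def)
  moreover have "norm (f p x) \<le> C\<^sup>2 * norm (cnj (\<alpha> (fst p)) * \<beta> (snd p))" if "x \<in> {a..b}" for p x
  proof -
    have "norm (cnj (u (fst p) x) * v (snd p) x) \<le> C * C"
      using bound_u[OF that] bound_v[OF that] by (simp add: norm_mult mult_mono')
    then have "norm (cnj (\<alpha> (fst p)) * \<beta> (snd p)) * norm (cnj (u (fst p) x) * v (snd p) x)
        \<le> norm (cnj (\<alpha> (fst p)) * \<beta> (snd p)) * (C * C)"
      by (rule mult_left_mono) simp
    then show ?thesis
      unfolding f_def norm_mult[of "cnj (\<alpha> (fst p)) * \<beta> (snd p)"] by (simp add: power2_eq_square algebra_simps)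
  qed
  moreover have "continuous_on {a..b} (f p)" for p
    unfolding f_def by (intro continuous_intros cont_u cont_v)
  ultimately have "((\<lambda>p. integral {a..b} (f p)) has_sum integral {a..b} (\<lambda>x. \<Sum>\<^sub>\<infinity>p. f p x)) UNIV"
    by (intro has_sum_integral_infsum) auto
  moreover have "integral {a..b} (\<lambda>x. cnj (\<Sum>\<^sub>\<infinity>i. \<alpha> i * u i x) * (\<Sum>\<^sub>\<infinity>j. \<beta> j * v j x))
      = integral {a..b} (\<lambda>x. \<Sum>\<^sub>\<infinity>p. f p x)"
    using cnj_infsum_mult_infsum[OF \<alpha> \<beta> bound_u bound_v] by (intro integral_cong) (simp add: f_def split_def)
  moreover have "integral {a..b} (f p) = cnj (\<alpha> (fst p)) * \<beta> (snd p) * integral {a..b} (\<lambda>x. cnj (u (fst p) x) * v (snd p) x)" for p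
    unfolding f_def by (rule integral_mult_right)
  ultimately show ?thesis
    by (simp add: split_def infsumI)
qed

lemma has_sum_graph_indicator:
  fixes F :: "'a \<times> 'b \<Rightarrow> complex"
  assumes "F summable_on UNIV"
  shows "((\<lambda>(m, m'). F (m, m') * (if P \<and> m' = g m then c else 0)) has_sum
           (if P then c * (\<Sum>\<^sub>\<infinity>m. F (m, g m)) else 0)) UNIV"
proof (cases P)
  case True
  have inj: "inj (\<lambda>m. (m, g m))"
    by (rule injI) simp
  have "(\<lambda>m. F (m, g m)) summable_on UNIV"
    using summable_on_subset_banach[OF assms, of "range (\<lambda>m. (m, g m))"] inj
    by (simp add: summable_on_reindex o_def)
  then have "((\<lambda>m. F (m, g m)) has_sum (\<Sum>\<^sub>\<infinity>m. F (m, g m))) UNIV"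
    by (rule has_sum_infsum)
  then have "((\<lambda>p. c * F p) has_sum c * (\<Sum>\<^sub>\<infinity>m. F (m, g m))) (range (\<lambda>m. (m, g m)))"
    using inj by (simp add: has_sum_reindex o_def has_sum_cmult_right)
  then show ?thesis
    using True by (subst has_sum_cong_neutral[where T = "range (\<lambda>m. (m, g m))" and g = "\<lambda>p. c * F p"]) auto
qed (simp add: case_prod_unfold)

lemma has_integral_cis_linear:
  fixes c L :: real
  assumes "c \<noteq> 0" and "0 \<le> L"
  shows "((\<lambda>x. cis (c * x)) has_integral (cis (c * L) - 1) / (\<i> * c)) {0..L}"
proof -
  have "((\<lambda>x. cis (c * x) / (\<i> * c)) has_vector_derivative cis (c * x)) (at x within {0..L})" for x
    unfolding has_vector_derivative_def
    using assms(1) by (auto intro!: derivative_eq_intros simp: fun_eq_iff scaleR_conv_of_real field_simps)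
  from fundamental_theorem_of_calculus[OF assms(2) this] show ?thesis
    by (simp add: diff_divide_distrib)
qed

lemma integral_cis_full_period:
  assumes "r > 0" and "u \<in> \<int>"
  shows "integral {0..2 * pi * r} (\<lambda>x. cis (u * x / r)) = (if u = 0 then 2 * pi * r else 0)"
proof (cases "u = 0")
  case False
  have "((\<lambda>x. cis (u / r * x)) has_integral (cis (u / r * (2 * pi * r)) - 1) / (\<i> * (u / r))) {0..2 * pi * r}"
    using False assms by (intro has_integral_cis_linear) auto
  moreover have "cis (u / r * (2 * pi * r)) = 1"
    using assms cis_multiple_2pi[of u] by (simp add: field_simps)
  ultimately show ?thesis
    using False by (simp add: integral_unique)
qed (use assms in \<open>simp add: scaleR_conv_of_real\<close>)

lemma integral_cis_add_cis_neg_half_period: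
  assumes "r > 0" and "u \<in> \<int>"
  shows "integral {0..pi * r} (\<lambda>x. cis (u * x / r) + cis (- (u * x / r))) = (if u = 0 then 2 * pi * r else 0)"
proof (cases "u = 0")
  case False
  have "((\<lambda>x. cis (u / r * x) + cis (- u / r * x)) has_integral
          (cis (u / r * (pi * r)) - 1) / (\<i> * (u / r)) + (cis (- u / r * (pi * r)) - 1) / (\<i> * (- u / r))) {0..pi * r}"
    using False assms by (intro has_integral_add has_integral_cis_linear) auto
  moreover have "cis (u * pi) = cis (- (u * pi))"
  proof -
    have "cis (u * pi) = cis (- (u * pi)) * cis (2 * pi * u)"
      by (simp add: cis_mult algebra_simps)
    then show ?thesis
      using assms by simp
  qed
  ultimately show ?thesis
    using False assms by (simp add: integral_unique field_simps)
qed (use assms in \<open>simp add: scaleR_conv_of_real\<close>)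

definition wave :: "real \<Rightarrow> real \<Rightarrow> complex" where
  "wave s \<phi> = cis \<phi> + of_real s * cis (- \<phi>)"

lemma norm_wave_le:
  assumes "\<bar>s\<bar> \<le> 1"
  shows "norm (wave s \<phi>) \<le> 2"
proof -
  have "norm (wave s \<phi>) \<le> norm (cis \<phi>) + norm (of_real s * cis (- \<phi>))"
    unfolding wave_def by (rule norm_triangle_ineq)
  also have "\<dots> \<le> 2"
    using assms by (simp add: norm_mult)
  finally show ?thesis .
qed

lemma cnj_wave_mult_wave:
  "cnj (wave s a) * wave s b
     = cis (b - a) + of_real (s\<^sup>2) * cis (- (b - a)) + of_real s * (cis (a + b) + cis (- (a + b)))"
proof -
  have "cnj (wave s a) * wave s b = cis (- a) * cis b + of_real s * of_real s * (cis a * cis (- b))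
      + of_real s * (cis a * cis b + cis (- a) * cis (- b))"
    by (simp add: wave_def cis_cnj algebra_simps)
  then show ?thesis
    by (simp add: cis_mult power2_eq_square algebra_simps)
qed

lemma integral_cnj_cis_mult_cis:
  assumes "r > 0" and "b - a \<in> \<int>"
  shows "integral {0..2 * pi * r} (\<lambda>x. cnj (cis (a * x / r)) * cis (b * x / r)) = (if a = b then 2 * pi * r else 0)"
proof -
  have "cnj (cis (a * x / r)) * cis (b * x / r) = cis ((b - a) * x / r)" for x
    by (simp add: cis_cnj cis_mult diff_divide_distrib algebra_simps)
  then show ?thesis
    using integral_cis_full_period[OF assms] by simp
qed

lemma integral_cnj_wave_mult_wave:
  assumes "r > 0" and "s\<^sup>2 = 1" and "b - a \<in> \<int>" and "a + b \<in> \<int>"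
  shows "integral {0..pi * r} (\<lambda>x. cnj (wave s (a * x / r)) * wave s (b * x / r))
           = 2 * pi * r * ((if a = b then 1 else 0) + s * (if a = - b then 1 else 0))"
proof -
  define E where "E u x = cis (u * x / r) + cis (- (u * x / r))" for u x
  have "cnj (wave s (a * x / r)) * wave s (b * x / r) = E (b - a) x + of_real s * E (a + b) x" for x
    unfolding cnj_wave_mult_wave E_def using assms(2) by (simp add: algebra_simps add_divide_distrib diff_divide_distrib)
  moreover have "E u integrable_on {0..pi * r}" for u
    unfolding E_def using assms(1) by (auto intro!: integrable_continuous_interval continuous_intros)
  ultimately have "integral {0..pi * r} (\<lambda>x. cnj (wave s (a * x / r)) * wave s (b * x / r))
      = integral {0..pi * r} (E (b - a)) + of_real s * integral {0..pi * r} (E (a + b))"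
    by (simp add: integral_add integrable_on_mult_right)
  also have "\<dots> = 2 * pi * r * ((if a = b then 1 else 0) + s * (if a = - b then 1 else 0))"
  proof -
    have "integral {0..pi * r} (E (b - a)) = (if a = b then 2 * pi * r else 0)"
      unfolding E_def using integral_cis_add_cis_neg_half_period[OF assms(1,3)] by simp
    moreover have "integral {0..pi * r} (E (a + b)) = (if a = - b then 2 * pi * r else 0)"
      unfolding E_def using integral_cis_add_cis_neg_half_period[OF assms(1,4)] by (simp add: eq_neg_iff_add_eq_0)
    ultimately show ?thesis
      by (simp add: algebra_simps)
  qed
  finally show ?thesis .
qed

definition freq :: "real \<Rightarrow> real \<Rightarrow> int \<Rightarrow> real" where
  "freq n J m = n * (of_int m - 1/2) + J"

lemma freq_eq_freq_iff:
  assumes "\<bar>J' - J\<bar> < n"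
  shows "freq n J m = freq n J' m' \<longleftrightarrow> J = J' \<and> m = m'"
proof
  assume eq: "freq n J m = freq n J' m'"
  have n: "n > 0"
    using assms abs_ge_zero[of "J' - J"] by linarith
  have "freq n J m - freq n J' m' = n * of_int (m - m') - (J' - J)"
    by (simp add: freq_def field_simps)
  with eq have n_diff: "n * of_int (m - m') = J' - J"
    by simp
  have "m = m'"
  proof (rule ccontr)
    assume "m \<noteq> m'"
    then have "\<bar>real_of_int (m - m')\<bar> \<ge> 1"
      by linarith
    then have "n \<le> n * \<bar>real_of_int (m - m')\<bar>"
      using n by (simp add: mult_le_cancel_left1)
    also have "\<dots> = \<bar>J' - J\<bar>"
      using n by (simp flip: n_diff add: abs_mult)
    finally show False
      using assms by simp
  qed
  with eq show "J = J' \<and> m = m'"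
    by (simp add: freq_def)
qed simp

lemma freq_eq_neg_freq_iff:
  assumes "0 \<le> J" "2 * J \<le> n" "0 \<le> J'" "2 * J' \<le> n" "n > 0"
  shows "freq n J m = - freq n J' m' \<longleftrightarrow> J = J' \<and> (J = 0 \<and> m' = 1 - m \<or> 2 * J = n \<and> m' = - m)"
proof -
  have "freq n J m + freq n J' m' = n * of_int (m + m' - 1) + (J + J')"
    by (simp add: freq_def field_simps)
  then have "freq n J m = - freq n J' m' \<longleftrightarrow> n * of_int (m + m' - 1) + (J + J') = 0"
    by (auto simp: eq_neg_iff_add_eq_0)
  also have "\<dots> \<longleftrightarrow> (m + m' - 1 = 0 \<and> J + J' = 0) \<or> (m + m' - 1 = -1 \<and> J + J' = n)"
  proof -
    consider "m + m' - 1 \<ge> 1" | "m + m' - 1 = 0" | "m + m' - 1 = -1" | "m + m' - 1 \<le> -2"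
      by linarith
    then show ?thesis
    proof cases
      case 1
      then have "n * 1 \<le> n * of_int (m + m' - 1)"
        using assms by (intro mult_left_mono) auto
      then have "n * of_int (m + m' - 1) + (J + J') \<noteq> 0"
        using assms by linarith
      then show ?thesis
        using 1 by auto
    next
      case 4
      then have "n * of_int (m + m' - 1) \<le> n * (-2)"
        using assms by (intro mult_left_mono) auto
      then have "n * of_int (m + m' - 1) + (J + J') \<noteq> 0"
        using assms by linarith
      then show ?thesis
        using 4 by auto
    qed auto
  qed
  also have "\<dots> \<longleftrightarrow> J = J' \<and> (J = 0 \<and> m' = 1 - m \<or> 2 * J = n \<and> m' = - m)"
    using assms by auto
  finally show ?thesis .
qed

lemma freq_diff_Ints:
  assumes "n \<in> \<int>" and "J' - J \<in> \<int>"
  shows "freq n J' m' - freq n J m \<in> \<int>"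
proof -
  have "freq n J' m' - freq n J m = n * of_int (m' - m) + (J' - J)"
    by (simp add: freq_def algebra_simps)
  then show ?thesis
    using assms by simp
qed

lemma freq_add_Ints:
  assumes "n \<in> \<int>" and "J + J' \<in> \<int>"
  shows "freq n J m + freq n J' m' \<in> \<int>"
proof -
  have "freq n J m + freq n J' m' = n * of_int (m + m' - 1) + (J + J')"
    by (simp add: freq_def field_simps)
  then show ?thesis
    using assms by simp
qed

lemma integral_cnj_cis_series_mult:
  fixes \<alpha> \<beta> :: "int \<Rightarrow> complex"
  assumes \<alpha>: "\<alpha> summable_on UNIV" and \<beta>: "\<beta> summable_on UNIV"
    and r: "r > 0" and n: "n \<in> \<int>" and J: "J' - J \<in> \<int>" "\<bar>J' - J\<bar> < n"
  shows "integral {0..2 * pi * r}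
           (\<lambda>x. cnj (\<Sum>\<^sub>\<infinity>m. \<alpha> m * cis (freq n J m * x / r)) * (\<Sum>\<^sub>\<infinity>m. \<beta> m * cis (freq n J' m * x / r)))
         = (if J = J' then 2 * pi * r * (\<Sum>\<^sub>\<infinity>m. cnj (\<alpha> m) * \<beta> m) else 0)"
proof -
  have gram: "integral {0..2 * pi * r} (\<lambda>x. cnj (cis (freq n J m * x / r)) * cis (freq n J' m' * x / r))
      = (if J = J' \<and> m' = m then complex_of_real (2 * pi * r) else 0)" for m m'
    using integral_cnj_cis_mult_cis[OF r freq_diff_Ints[OF n J(1)]] freq_eq_freq_iff[OF J(2)] by auto
  have "integral {0..2 * pi * r}
           (\<lambda>x. cnj (\<Sum>\<^sub>\<infinity>m. \<alpha> m * cis (freq n J m * x / r)) * (\<Sum>\<^sub>\<infinity>m. \<beta> m * cis (freq n J' m * x / r)))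
      = (\<Sum>\<^sub>\<infinity>(m, m'). cnj (\<alpha> m) * \<beta> m'
           * integral {0..2 * pi * r} (\<lambda>x. cnj (cis (freq n J m * x / r)) * cis (freq n J' m' * x / r)))"
    using \<alpha> \<beta> r by (intro integral_cnj_infsum_mult_infsum[where C = 1]) (auto intro!: continuous_intros)
  also have "\<dots> = (\<Sum>\<^sub>\<infinity>(m, m'). cnj (\<alpha> m) * \<beta> m' * (if J = J' \<and> m' = m then complex_of_real (2 * pi * r) else 0))"
    by (simp only: gram)
  also have "\<dots> = (if J = J' then complex_of_real (2 * pi * r) * (\<Sum>\<^sub>\<infinity>m. cnj (\<alpha> m) * \<beta> m) else 0)"
  proof (rule infsumI)
    have "(\<lambda>(m, m'). cnj (\<alpha> m) * \<beta> m') summable_on UNIV"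
      using \<alpha> \<beta> by (intro infsum_mult_infsum(1)) simp_all
    from has_sum_graph_indicator[OF this, of "J = J'" "\<lambda>m. m" "complex_of_real (2 * pi * r)"]
    show "((\<lambda>(m, m'). cnj (\<alpha> m) * \<beta> m' * (if J = J' \<and> m' = m then complex_of_real (2 * pi * r) else 0)) has_sum
        (if J = J' then complex_of_real (2 * pi * r) * (\<Sum>\<^sub>\<infinity>m. cnj (\<alpha> m) * \<beta> m) else 0)) UNIV"
      by (simp only: case_prod_conv)
  qed
  finally show ?thesis
    by simp
qed

lemma integral_cnj_wave_freq_mult_wave_freq:
  assumes r: "r > 0" and n: "n \<in> \<int>" "n > 0" and s: "s\<^sup>2 = 1"
    and J: "J' - J \<in> \<int>" "2 * J \<in> \<int>" "0 \<le> J" "2 * J \<le> n" "0 \<le> J'" "2 * J' \<le> n"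
  shows "integral {0..pi * r} (\<lambda>x. cnj (wave s (freq n J m * x / r)) * wave s (freq n J' m' * x / r))
           = (if J = J' \<and> m' = m then complex_of_real (2 * pi * r) else 0)
             + (if J = J' \<and> J = 0 \<and> m' = 1 - m then complex_of_real (2 * pi * r * s) else 0)
             + (if J = J' \<and> 2 * J = n \<and> m' = - m then complex_of_real (2 * pi * r * s) else 0)"
proof -
  have "J + J' = 2 * J + (J' - J)"
    by simp
  also have "\<dots> \<in> \<int>"
    using J(1,2) by (intro Ints_add)
  finally have sum_Ints: "J + J' \<in> \<int>" .
  have "\<bar>J' - J\<bar> < n"
    using J n by linarith
  then have "freq n J m = freq n J' m' \<longleftrightarrow> J = J' \<and> m' = m"
    by (auto simp: freq_eq_freq_iff)
  moreover have "freq n J m = - freq n J' m' \<longleftrightarrow> J = J' \<and> J = 0 \<and> m' = 1 - m \<or> J = J' \<and> 2 * J = n \<and> m' = - m"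
    using freq_eq_neg_freq_iff[OF J(3-6) n(2)] by auto
  ultimately show ?thesis
    unfolding integral_cnj_wave_mult_wave[OF r s freq_diff_Ints[OF n(1) J(1)] freq_add_Ints[OF n(1) sum_Ints]]
    using n(2) by (auto simp: algebra_simps)
qed

lemma integral_cnj_wave_series_mult:
  fixes \<alpha> \<beta> :: "int \<Rightarrow> complex"
  assumes \<alpha>: "\<alpha> summable_on UNIV" and \<beta>: "\<beta> summable_on UNIV"
    and r: "r > 0" and n: "n \<in> \<int>" "n > 0" and s: "s\<^sup>2 = 1"
    and J: "J' - J \<in> \<int>" "2 * J \<in> \<int>" "0 \<le> J" "2 * J \<le> n" "0 \<le> J'" "2 * J' \<le> n"
  shows "integral {0..pi * r}
           (\<lambda>x. cnj (\<Sum>\<^sub>\<infinity>m. \<alpha> m * wave s (freq n J m * x / r)) * (\<Sum>\<^sub>\<infinity>m. \<beta> m * wave s (freq n J' m * x / r)))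
         = (if J = J' then 2 * pi * r * ((\<Sum>\<^sub>\<infinity>m. cnj (\<alpha> m) * \<beta> m)
              + s * ((if J = 0 then \<Sum>\<^sub>\<infinity>m. cnj (\<alpha> m) * \<beta> (1 - m) else 0)
                     + (if 2 * J = n then \<Sum>\<^sub>\<infinity>m. cnj (\<alpha> m) * \<beta> (- m) else 0)))
            else 0)"
proof -
  define F where "F = (\<lambda>(m, m'). cnj (\<alpha> m) * \<beta> m')"
  have F: "F summable_on UNIV"
    unfolding F_def using \<alpha> \<beta> by (intro infsum_mult_infsum(1)) simp_all
  have "\<bar>s\<bar> \<le> 1"
    using s by (auto simp: power2_eq_1_iff)
  then have "integral {0..pi * r}
           (\<lambda>x. cnj (\<Sum>\<^sub>\<infinity>m. \<alpha> m * wave s (freq n J m * x / r)) * (\<Sum>\<^sub>\<infinity>m. \<beta> m * wave s (freq n J' m * x / r)))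
      = (\<Sum>\<^sub>\<infinity>(m, m'). cnj (\<alpha> m) * \<beta> m'
           * integral {0..pi * r} (\<lambda>x. cnj (wave s (freq n J m * x / r)) * wave s (freq n J' m' * x / r)))"
    using \<alpha> \<beta> r norm_wave_le
    by (intro integral_cnj_infsum_mult_infsum[where C = 2]) (auto simp: wave_def intro!: continuous_intros)
  also have "\<dots> = (\<Sum>\<^sub>\<infinity>(m, m'). F (m, m') * (if J = J' \<and> m' = m then complex_of_real (2 * pi * r) else 0)
        + F (m, m') * (if J = J' \<and> J = 0 \<and> m' = 1 - m then complex_of_real (2 * pi * r * s) else 0)
        + F (m, m') * (if J = J' \<and> 2 * J = n \<and> m' = - m then complex_of_real (2 * pi * r * s) else 0))"
    by (simp only: integral_cnj_wave_freq_mult_wave_freq[OF r n s J] F_def case_prod_conv distrib_left)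
  also have "\<dots> = (if J = J' then complex_of_real (2 * pi * r) * (\<Sum>\<^sub>\<infinity>m. F (m, m)) else 0)
      + (if J = J' \<and> J = 0 then complex_of_real (2 * pi * r * s) * (\<Sum>\<^sub>\<infinity>m. F (m, 1 - m)) else 0)
      + (if J = J' \<and> 2 * J = n then complex_of_real (2 * pi * r * s) * (\<Sum>\<^sub>\<infinity>m. F (m, - m)) else 0)"
    using has_sum_add[OF has_sum_add[OF
          has_sum_graph_indicator[OF F, of "J = J'" "\<lambda>m. m" "complex_of_real (2 * pi * r)"]
          has_sum_graph_indicator[OF F, of "J = J' \<and> J = 0" "\<lambda>m. 1 - m" "complex_of_real (2 * pi * r * s)"]]
          has_sum_graph_indicator[OF F, of "J = J' \<and> 2 * J = n" "\<lambda>m. - m" "complex_of_real (2 * pi * r * s)"]]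
    by (intro infsumI) (simp only: case_prod_unfold conj_assoc)
  finally show ?thesis
    by (simp add: F_def algebra_simps)
qed

lemma summable_on_exp_neg_abs_int: "(\<lambda>m::int. exp (- \<bar>real_of_int m\<bar>)) summable_on UNIV"
proof -
  have geom: "(\<lambda>n::nat. exp (- real n)) summable_on UNIV"
  proof (rule norm_summable_imp_summable_on)
    show "summable (\<lambda>n. norm (exp (- real n)))"
      using summable_geometric[of "exp (-1) :: real"] by (simp add: exp_of_nat_mult[symmetric])
  qed
  have "(\<lambda>m::int. exp (- \<bar>real_of_int m\<bar>)) summable_on range int"
    using geom by (subst summable_on_reindex) (auto simp: o_def)
  moreover have "(\<lambda>m::int. exp (- \<bar>real_of_int m\<bar>)) summable_on range (\<lambda>n. - int n)"
    using geom by (subst summable_on_reindex) (auto simp: o_def inj_on_def)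
  moreover have "range int \<union> range (\<lambda>n. - int n) = UNIV"
    by (auto intro: int_cases2[of x for x])
  ultimately show ?thesis
    by (metis summable_on_union)
qed

text \<open>The coefficient of \<open>cis (2 * pi * z * (m - 1/2 + \<sigma>))\<close> in
  \<open>exp (2 * pi * \<i> * \<sigma> * z) * theta2 (\<sigma> * \<i> * \<kappa> + z) (\<i> * \<kappa>)\<close>.\<close>

definition theta_coeff :: "real \<Rightarrow> real \<Rightarrow> int \<Rightarrow> real" where
  "theta_coeff \<sigma> \<kappa> m = exp (- pi * \<kappa> * ((of_int m - 1/2 + \<sigma>)\<^sup>2 - \<sigma>\<^sup>2))"

lemma theta_coeff_pos: "theta_coeff \<sigma> \<kappa> m > 0"
  by (simp add: theta_coeff_def)

lemma theta_coeff_mult: "theta_coeff \<sigma> \<kappa>\<^sub>1 m * theta_coeff \<sigma> \<kappa>\<^sub>2 m = theta_coeff \<sigma> (\<kappa>\<^sub>1 + \<kappa>\<^sub>2) m"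
  by (simp add: theta_coeff_def exp_add[symmetric] algebra_simps)

lemma theta_coeff_reflect:
  assumes "of_int (m + m') = 1 - 2 * \<sigma>"
  shows "theta_coeff \<sigma> \<kappa> m' = theta_coeff \<sigma> \<kappa> m"
proof -
  have "of_int m' - 1/2 + \<sigma> = - (of_int m - 1/2 + \<sigma>)"
    using assms unfolding of_int_add by linarith
  then show ?thesis
    unfolding theta_coeff_def by (simp only: power2_minus)
qed

lemma summable_theta_coeff:
  assumes "\<kappa> > 0"
  shows "theta_coeff \<sigma> \<kappa> summable_on UNIV"
proof -
  define a where "a = pi * \<kappa>"
  have a: "a > 0"
    using assms by (simp add: a_def)
  define K where "K = \<bar>1/2 - \<sigma>\<bar> + 1 / (4 * a) + a * \<sigma>\<^sup>2"
  have "theta_coeff \<sigma> \<kappa> m \<le> exp K * exp (- \<bar>real_of_int m\<bar>)" for m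
  proof -
    define y where "y = real_of_int m - 1/2 + \<sigma>"
    have "0 \<le> (2 * a * \<bar>y\<bar> - 1)\<^sup>2"
      by simp
    then have "\<bar>y\<bar> - 1 / (4 * a) \<le> a * y\<^sup>2"
      using a by (simp add: power2_eq_square field_simps abs_mult_self_eq)
    moreover have "\<bar>real_of_int m\<bar> \<le> \<bar>y\<bar> + \<bar>1/2 - \<sigma>\<bar>"
      unfolding y_def by linarith
    ultimately have "- (a * (y\<^sup>2 - \<sigma>\<^sup>2)) \<le> K - \<bar>real_of_int m\<bar>"
      unfolding K_def by (simp add: algebra_simps)
    then show ?thesis
      unfolding theta_coeff_def y_def[symmetric] by (simp add: a_def exp_add[symmetric])
  qed
  then show ?thesis
    using theta_coeff_pos
    by (intro summable_on_comparison_test[OF summable_on_cmult_right[OF summable_on_exp_neg_abs_int]])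
       (auto intro: less_imp_le)
qed

lemma theta_term_shifted:
  fixes \<sigma> \<kappa> z :: real
  shows "exp (2 * pi * \<i> * \<sigma> * z) * (exp (pi * \<i> * (\<i> * \<kappa>) * (of_int m - 1/2)\<^sup>2)
            * exp (pi * \<i> * (\<sigma> * (\<i> * \<kappa>) + z) * (2 * of_int m - 1)))
       = of_real (theta_coeff \<sigma> \<kappa> m) * cis (2 * pi * z * (of_int m - 1/2 + \<sigma>))"
proof -
  have "exp (2 * pi * \<i> * \<sigma> * z) * (exp (pi * \<i> * (\<i> * \<kappa>) * (of_int m - 1/2)\<^sup>2)
            * exp (pi * \<i> * (\<sigma> * (\<i> * \<kappa>) + z) * (2 * of_int m - 1)))
      = exp (2 * pi * \<i> * \<sigma> * z + pi * \<i> * (\<i> * \<kappa>) * (of_int m - 1/2)\<^sup>2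
            + pi * \<i> * (\<sigma> * (\<i> * \<kappa>) + z) * (2 * of_int m - 1))"
    by (simp only: exp_add mult.assoc)
  also have "\<dots> = exp (of_real (- pi * \<kappa> * ((of_int m - 1/2 + \<sigma>)\<^sup>2 - \<sigma>\<^sup>2))
             + \<i> * of_real (2 * pi * z * (of_int m - 1/2 + \<sigma>)))"
    by (rule arg_cong[where f = exp]) (simp add: algebra_simps power2_eq_square)
  also have "\<dots> = of_real (theta_coeff \<sigma> \<kappa> m) * cis (2 * pi * z * (of_int m - 1/2 + \<sigma>))"
    by (simp only: theta_coeff_def of_real_exp cis_conv_exp exp_add)
  finally show ?thesis .
qed

lemma has_sum_shifted_theta_series:
  fixes \<sigma> \<kappa> z :: real and e :: "int \<Rightarrow> complex"
  assumes "\<kappa> > 0" and "\<And>m. norm (e m) \<le> 1"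
  shows "((\<lambda>m. e m * of_real (theta_coeff \<sigma> \<kappa> m) * cis (2 * pi * z * (of_int m - 1/2 + \<sigma>))) has_sum
           exp (2 * pi * \<i> * \<sigma> * z) * (\<Sum>\<^sub>\<infinity>m. e m * exp (pi * \<i> * (\<i> * \<kappa>) * (of_int m - 1/2)\<^sup>2)
              * exp (pi * \<i> * (\<sigma> * (\<i> * \<kappa>) + z) * (2 * of_int m - 1)))) UNIV"
proof -
  have "e m * of_real (theta_coeff \<sigma> \<kappa> m) * cis (2 * pi * z * (of_int m - 1/2 + \<sigma>))
      = exp (2 * pi * \<i> * \<sigma> * z) * (e m * exp (pi * \<i> * (\<i> * \<kappa>) * (of_int m - 1/2)\<^sup>2)
              * exp (pi * \<i> * (\<sigma> * (\<i> * \<kappa>) + z) * (2 * of_int m - 1)))" for m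
    by (simp only: mult.assoc[of "e m"] theta_term_shifted[symmetric] mult.left_commute[of "e m"])
  then have eq: "(\<Sum>\<^sub>\<infinity>m. e m * of_real (theta_coeff \<sigma> \<kappa> m) * cis (2 * pi * z * (of_int m - 1/2 + \<sigma>)))
      = exp (2 * pi * \<i> * \<sigma> * z) * (\<Sum>\<^sub>\<infinity>m. e m * exp (pi * \<i> * (\<i> * \<kappa>) * (of_int m - 1/2)\<^sup>2)
              * exp (pi * \<i> * (\<sigma> * (\<i> * \<kappa>) + z) * (2 * of_int m - 1)))"
    by (simp only: infsum_cmult_right')
  have "(\<lambda>m. of_real (theta_coeff \<sigma> \<kappa> m) * (e m * cis (2 * pi * z * (of_int m - 1/2 + \<sigma>)))) summable_on UNIV"
    using assms by (intro summable_on_mult_bounded[where C = 1] summable_on_of_real summable_theta_coeff)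
      (auto simp: norm_mult)
  then have "(\<lambda>m. e m * of_real (theta_coeff \<sigma> \<kappa> m) * cis (2 * pi * z * (of_int m - 1/2 + \<sigma>))) summable_on UNIV"
    by (simp only: ac_simps)
  then have "((\<lambda>m. e m * of_real (theta_coeff \<sigma> \<kappa> m) * cis (2 * pi * z * (of_int m - 1/2 + \<sigma>))) has_sum
      (\<Sum>\<^sub>\<infinity>m. e m * of_real (theta_coeff \<sigma> \<kappa> m) * cis (2 * pi * z * (of_int m - 1/2 + \<sigma>)))) UNIV"
    by (rule has_sum_infsum)
  also note eq
  finally show ?thesis .
qed

lemma theta2_eq_infsum_theta_coeff:
  fixes \<sigma> \<kappa> :: real
  assumes "\<kappa> > 0"
  shows "theta2 (\<sigma> * (\<i> * \<kappa>)) (\<i> * \<kappa>) = (\<Sum>\<^sub>\<infinity>m. of_real (theta_coeff \<sigma> \<kappa> m))"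
  using has_sum_shifted_theta_series[OF assms, of "\<lambda>_. 1" \<sigma> 0]
  by (simp add: theta2_def infsumI)

lemma infsum_theta_coeff_pairing:
  fixes e :: "int \<Rightarrow> complex" and g :: "int \<Rightarrow> int"
  assumes "\<And>m. c * (cnj (e m) * e (g m)) = 1"
    and "\<And>m. theta_coeff \<sigma> \<kappa>\<^sub>2 (g m) = theta_coeff \<sigma> \<kappa>\<^sub>2 m"
  shows "c * (\<Sum>\<^sub>\<infinity>m. cnj (e m * of_real (theta_coeff \<sigma> \<kappa>\<^sub>1 m)) * (e (g m) * of_real (theta_coeff \<sigma> \<kappa>\<^sub>2 (g m))))
           = (\<Sum>\<^sub>\<infinity>m. of_real (theta_coeff \<sigma> (\<kappa>\<^sub>1 + \<kappa>\<^sub>2) m))"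
proof -
  have "c * (cnj (e m * of_real (theta_coeff \<sigma> \<kappa>\<^sub>1 m)) * (e (g m) * of_real (theta_coeff \<sigma> \<kappa>\<^sub>2 (g m))))
      = c * (cnj (e m) * e (g m)) * of_real (theta_coeff \<sigma> \<kappa>\<^sub>1 m * theta_coeff \<sigma> \<kappa>\<^sub>2 m)" for m
    by (simp add: assms(2) ac_simps)
  then show ?thesis
    by (simp add: assms(1) theta_coeff_mult flip: infsum_cmult_right')
qed

fun refl_sign :: "sharp_type \<Rightarrow> real" where
  "refl_sign SA = 0" | "refl_sign SB = -1" | "refl_sign SC = -1" | "refl_sign SD = 1"

definition coeff_sign :: "sharp_type \<Rightarrow> int \<Rightarrow> complex" where
  "coeff_sign S m = (if S = SB then \<i> * (if even m then 1 else -1) else 1)"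

lemma has_sum_Theta_of:
  fixes \<sigma> \<kappa> z :: real
  assumes "\<kappa> > 0"
  shows "((\<lambda>m. coeff_sign S m * of_real (theta_coeff \<sigma> \<kappa> m) * wave (refl_sign S) (2 * pi * z * (of_int m - 1/2 + \<sigma>)))
           has_sum Theta_of S \<sigma> z (\<i> * \<kappa>)) UNIV"
proof -
  define \<theta> where "\<theta> = (if S = SB then theta1 else theta2)"
  have shifted: "((\<lambda>m. coeff_sign S m * of_real (theta_coeff \<sigma> \<kappa> m) * cis (2 * pi * y * (of_int m - 1/2 + \<sigma>)))
      has_sum exp (2 * pi * \<i> * \<sigma> * y) * \<theta> (\<sigma> * (\<i> * \<kappa>) + y) (\<i> * \<kappa>)) UNIV" for y :: real
  proof (cases "S = SB")
    case True
    have "((\<lambda>m. \<i> * ((if even m then 1 else -1) * of_real (theta_coeff \<sigma> \<kappa> m) * cis (2 * pi * y * (of_int m - 1/2 + \<sigma>))))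
        has_sum \<i> * (exp (2 * pi * \<i> * \<sigma> * y) * (\<Sum>\<^sub>\<infinity>m. (if even m then 1 else -1) * exp (pi * \<i> * (\<i> * \<kappa>) * (of_int m - 1/2)\<^sup>2)
              * exp (pi * \<i> * (\<sigma> * (\<i> * \<kappa>) + y) * (2 * of_int m - 1))))) UNIV"
      using assms by (intro has_sum_cmult_right has_sum_shifted_theta_series) auto
    then show ?thesis
      using True by (simp add: \<theta>_def theta1_def coeff_sign_def ac_simps)
  next
    case False
    show ?thesis
      using has_sum_shifted_theta_series[OF assms, of "\<lambda>_. 1" \<sigma> y] False
      by (simp add: \<theta>_def theta2_def coeff_sign_def)
  qed
  have "Theta_of S \<sigma> z (\<i> * \<kappa>) = exp (2 * pi * \<i> * \<sigma> * z) * \<theta> (\<sigma> * (\<i> * \<kappa>) + z) (\<i> * \<kappa>)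
      + of_real (refl_sign S) * (exp (2 * pi * \<i> * \<sigma> * (- z)) * \<theta> (\<sigma> * (\<i> * \<kappa>) + (- z)) (\<i> * \<kappa>))"
    by (cases S) (simp_all add: \<theta>_def ThetaA_def ThetaB_def ThetaC_def ThetaD_def)
  with has_sum_add[OF shifted[of z] has_sum_cmult_right[OF shifted[of "- z"], of "of_real (refl_sign S)"]]
  show ?thesis
    by (simp add: wave_def algebra_simps)
qed

lemma Ncal_pos:
  assumes "N \<ge> 1" and "R = RD \<Longrightarrow> N \<ge> 2"
  shows "Ncal R N > 0"
  using assms by (cases R) auto

lemma Ncal_Ints: "Ncal R N \<in> \<int>"
  by (cases R) auto

lemma two_Jfun_Ints: "2 * Jfun R j \<in> \<int>"
proof -
  have "2 * Jfun R j = of_int (if R \<in> {RA, RCv} then 2 * int j - 1 else if R \<in> {RC, RBC} then 2 * int j else 2 * int j - 2)"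
    by (cases R) auto
  then show ?thesis
    by simp
qed

lemma Jfun_diff: "Jfun R k - Jfun R j = real k - real j"
  by (cases R) auto

lemma Jfun_reflected_bounds:
  assumes "R \<noteq> RA" and "R = RD \<Longrightarrow> N \<ge> 2" and "j \<in> {1..N}"
  shows "0 \<le> Jfun R j" and "2 * Jfun R j \<le> Ncal R N"
  using assms by (cases R; auto)+

lemma Jfun_eq_0_iff:
  assumes "R \<noteq> RA" and "j \<ge> 1"
  shows "Jfun R j = 0 \<longleftrightarrow> R \<in> {RB, RBv, RD} \<and> j = 1"
  using assms by (cases R) auto

lemma two_Jfun_eq_Ncal_iff:
  assumes "R \<noteq> RA" and "j \<le> N"
  shows "2 * Jfun R j = Ncal R N \<longleftrightarrow> R = RD \<and> j = N"
  using assms by (cases R) auto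

lemma refl_sign_sharp_squared: "R \<noteq> RA \<Longrightarrow> (refl_sign (sharp R))\<^sup>2 = 1"
  by (cases R) auto

lemma refl_sign_cnj_coeff_sign:
  assumes "S \<in> {SB, SD}"
  shows "of_real (refl_sign S) * (cnj (coeff_sign S m) * coeff_sign S (1 - m)) = 1"
  using assms by (auto simp: coeff_sign_def)

definition M_coeff :: "rtype \<Rightarrow> nat \<Rightarrow> real \<Rightarrow> nat \<Rightarrow> real \<Rightarrow> int \<Rightarrow> complex" where
  "M_coeff R N r j t m = coeff_sign (sharp R) m
     * of_real (theta_coeff (Jfun R j / Ncal R N) (Ncal R N ^ 2 * t / (2 * pi * r\<^sup>2)) m)"

lemma M_eq_infsum:
  assumes "Ncal R N > 0" and "r > 0" and "t > 0"
  shows "M R N r j x t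
           = (\<Sum>\<^sub>\<infinity>m. M_coeff R N r j t m * wave (refl_sign (sharp R)) (freq (Ncal R N) (Jfun R j) m * x / r))"
proof -
  define n where "n = Ncal R N"
  have "(of_real n)\<^sup>2 * tauf r t = \<i> * of_real (n\<^sup>2 * t / (2 * pi * r\<^sup>2))"
    by (simp add: tauf_def)
  moreover have "2 * pi * (n * xi r x) * (of_int m - 1/2 + Jfun R j / n) = freq n (Jfun R j) m * x / r" for m
    using assms by (simp add: n_def xi_def freq_def field_simps)
  moreover have "n\<^sup>2 * t / (2 * pi * r\<^sup>2) > 0"
    using assms by (simp add: n_def)
  ultimately have "((\<lambda>m. M_coeff R N r j t m * wave (refl_sign (sharp R)) (freq n (Jfun R j) m * x / r))
      has_sum M R N r j x t) UNIV"
    using has_sum_Theta_of[of "n\<^sup>2 * t / (2 * pi * r\<^sup>2)" "sharp R" "Jfun R j / n" "n * xi r x"]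
    by (simp add: M_def M_coeff_def n_def)
  then show ?thesis
    by (simp add: n_def infsumI)
qed

lemma summable_M_coeff:
  assumes "Ncal R N > 0" and "r > 0" and "t > 0"
  shows "M_coeff R N r j t summable_on UNIV"
proof -
  have "Ncal R N ^ 2 * t / (2 * pi * r\<^sup>2) > 0"
    using assms by simp
  then have "(\<lambda>m. of_real (theta_coeff (Jfun R j / Ncal R N) (Ncal R N ^ 2 * t / (2 * pi * r\<^sup>2)) m)
      * coeff_sign (sharp R) m) summable_on UNIV"
    by (intro summable_on_mult_bounded[where C = 1] summable_on_of_real summable_theta_coeff)
      (simp_all add: coeff_sign_def norm_mult)
  then show ?thesis
    unfolding M_coeff_def by (simp only: mult.commute)
qed

lemma theta2_Ncal_tauf:
  assumes "n > 0" and "r > 0" and "t > 0"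
  shows "theta2 (of_real (n * J) * tauf r t) ((of_real n)\<^sup>2 * tauf r t)
           = (\<Sum>\<^sub>\<infinity>m. of_real (theta_coeff (J / n) (n\<^sup>2 * t / (2 * pi * r\<^sup>2)) m))"
proof -
  define \<kappa> where "\<kappa> = n\<^sup>2 * t / (2 * pi * r\<^sup>2)"
  have "\<kappa> > 0"
    using assms by (simp add: \<kappa>_def)
  moreover have "of_real (n * J) * tauf r t = of_real (J / n) * (\<i> * of_real \<kappa>)"
    and "(of_real n)\<^sup>2 * tauf r t = \<i> * of_real \<kappa>"
    using assms by (simp_all add: \<kappa>_def tauf_def field_simps power2_eq_square)
  ultimately show ?thesis
    unfolding \<kappa>_def[symmetric] by (simp only: theta2_eq_infsum_theta_coeff)
qed

lemma infsum_cnj_M_coeff_pairing: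
  assumes "Ncal R N > 0" and "r > 0" and "0 < t" and "t < ts"
    and "\<And>m. c * (cnj (coeff_sign (sharp R) m) * coeff_sign (sharp R) (g m)) = 1"
    and "\<And>m \<kappa>. theta_coeff (Jfun R j / Ncal R N) \<kappa> (g m) = theta_coeff (Jfun R j / Ncal R N) \<kappa> m"
  shows "c * (\<Sum>\<^sub>\<infinity>m. cnj (M_coeff R N r j (ts - t) m) * M_coeff R N r j t (g m))
           = theta2 (of_real (Ncal R N * Jfun R j) * tauf r ts) ((of_real (Ncal R N))\<^sup>2 * tauf r ts)"
proof -
  define n where "n = Ncal R N"
  define \<kappa> where "\<kappa> t' = n\<^sup>2 * t' / (2 * pi * r\<^sup>2)" for t'
  have "\<kappa> (ts - t) + \<kappa> t = \<kappa> ts"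
    by (simp add: \<kappa>_def add_divide_distrib[symmetric] algebra_simps)
  with infsum_theta_coeff_pairing[of c "coeff_sign (sharp R)" g "Jfun R j / n" "\<kappa> t" "\<kappa> (ts - t)"] assms
  have "c * (\<Sum>\<^sub>\<infinity>m. cnj (M_coeff R N r j (ts - t) m) * M_coeff R N r j t (g m))
      = (\<Sum>\<^sub>\<infinity>m. complex_of_real (theta_coeff (Jfun R j / n) (\<kappa> ts) m))"
    by (simp add: M_coeff_def n_def \<kappa>_def)
  also have "\<dots> = theta2 (of_real (n * Jfun R j) * tauf r ts) ((of_real n)\<^sup>2 * tauf r ts)"
    using assms by (simp only: \<kappa>_def n_def theta2_Ncal_tauf)
  finally show ?thesis
    by (simp only: n_def)
qed

lemma integral_cnj_M_mult_M_RA: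
  assumes N: "N \<ge> 1" and r: "r > 0" and t: "0 < t" "t < ts" and jk: "j \<in> {1..N}" "k \<in> {1..N}"
  shows "integral {0..2 * pi * r} (\<lambda>x. cnj (M RA N r j x (ts - t)) * M RA N r k x t)
           = (if j = k then 2 * pi * r * theta2 (of_real (Ncal RA N * Jfun RA j) * tauf r ts)
                                            ((of_real (Ncal RA N))\<^sup>2 * tauf r ts) else 0)"
proof -
  define n where "n = Ncal RA N"
  have n: "n > 0"
    using N by (simp add: n_def)
  have t': "ts - t > 0"
    using t by simp
  have M: "M RA N r i x t' = (\<Sum>\<^sub>\<infinity>m. M_coeff RA N r i t' m * cis (freq n (Jfun RA i) m * x / r))"
    if "t' > 0" for i x t'
    using M_eq_infsum[of RA N r t' i x] n r that by (simp add: n_def wave_def)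
  have "real j \<ge> 1" "real k \<ge> 1" "real j \<le> real N" "real k \<le> real N"
    using jk by auto
  then have "\<bar>Jfun RA k - Jfun RA j\<bar> < n"
    unfolding Jfun_diff n_def Ncal.simps by arith
  then have "integral {0..2 * pi * r} (\<lambda>x. cnj (M RA N r j x (ts - t)) * M RA N r k x t)
      = (if Jfun RA j = Jfun RA k
         then 2 * pi * r * (\<Sum>\<^sub>\<infinity>m. cnj (M_coeff RA N r j (ts - t) m) * M_coeff RA N r k t m) else 0)"
    unfolding M[OF t(1)] M[OF t']
    using summable_M_coeff[of RA N r] n r t t'
    by (intro integral_cnj_cis_series_mult) (auto simp: n_def Ncal_Ints Jfun_diff)
  also have "\<dots> = (if j = k then 2 * pi * r * theta2 (of_real (n * Jfun RA j) * tauf r ts) ((of_real n)\<^sup>2 * tauf r ts)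
                    else 0)"
    using infsum_cnj_M_coeff_pairing[of RA N r t ts 1 "\<lambda>m. m" j] n r t Jfun_diff[of RA k j]
    by (auto simp: n_def coeff_sign_def)
  finally show ?thesis
    by (simp only: n_def)
qed

lemma infsum_cnj_M_coeff_reflections:
  assumes R: "R \<noteq> RA" and N: "N \<ge> 1" "R = RD \<Longrightarrow> N \<ge> 2" and r: "r > 0" and t: "0 < t" "t < ts"
    and j: "j \<in> {1..N}"
  defines "c \<equiv> M_coeff R N r j" and "s \<equiv> refl_sign (sharp R)" and "J \<equiv> Jfun R j" and "n \<equiv> Ncal R N"
  shows "(\<Sum>\<^sub>\<infinity>m. cnj (c (ts - t) m) * c t m)
           + s * ((if J = 0 then \<Sum>\<^sub>\<infinity>m. cnj (c (ts - t) m) * c t (1 - m) else 0)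
                  + (if 2 * J = n then \<Sum>\<^sub>\<infinity>m. cnj (c (ts - t) m) * c t (- m) else 0))
         = (1 + (if J = 0 then 1 else 0) + (if 2 * J = n then 1 else 0))
             * theta2 (of_real (n * J) * tauf r ts) ((of_real n)\<^sup>2 * tauf r ts)"
proof -
  define \<Theta> where "\<Theta> = theta2 (of_real (n * J) * tauf r ts) ((of_real n)\<^sup>2 * tauf r ts)"
  have pairing: "a * (\<Sum>\<^sub>\<infinity>m. cnj (c (ts - t) m) * c t (g m)) = \<Theta>"
    if "\<And>m. a * (cnj (coeff_sign (sharp R) m) * coeff_sign (sharp R) (g m)) = 1"
      and "\<And>m \<kappa>. theta_coeff (J / n) \<kappa> (g m) = theta_coeff (J / n) \<kappa> m" for a g
    using infsum_cnj_M_coeff_pairing[of R N r t ts a g j] that Ncal_pos[OF N] r t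
    by (simp add: c_def \<Theta>_def n_def J_def)
  have "(\<Sum>\<^sub>\<infinity>m. cnj (c (ts - t) m) * c t m) = \<Theta>"
    using pairing[of 1 "\<lambda>m. m"] by (simp add: coeff_sign_def)
  moreover have "s * (\<Sum>\<^sub>\<infinity>m. cnj (c (ts - t) m) * c t (1 - m)) = \<Theta>" if "J = 0"
  proof (rule pairing)
    have "R \<in> {RB, RBv, RD}"
      using Jfun_eq_0_iff[OF R, of j] that j by (simp add: J_def)
    then show "of_real s * (cnj (coeff_sign (sharp R) m) * coeff_sign (sharp R) (1 - m)) = 1" for m
      unfolding s_def by (intro refl_sign_cnj_coeff_sign) auto
    show "theta_coeff (J / n) \<kappa> (1 - m) = theta_coeff (J / n) \<kappa> m" for m \<kappa>
      using that by (intro theta_coeff_reflect) simp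
  qed
  moreover have "s * (\<Sum>\<^sub>\<infinity>m. cnj (c (ts - t) m) * c t (- m)) = \<Theta>" if "2 * J = n"
  proof (rule pairing)
    have "R = RD"
      using two_Jfun_eq_Ncal_iff[OF R, of j N] that j by (simp add: J_def n_def)
    then show "of_real s * (cnj (coeff_sign (sharp R) m) * coeff_sign (sharp R) (- m)) = 1" for m
      by (simp add: s_def coeff_sign_def)
    have "n > 0"
      using Ncal_pos[OF N] by (simp add: n_def)
    then show "theta_coeff (J / n) \<kappa> (- m) = theta_coeff (J / n) \<kappa> m" for m \<kappa>
      using that by (intro theta_coeff_reflect) simp
  qed
  ultimately show ?thesis
    unfolding \<Theta>_def[symmetric] by (simp add: distrib_left algebra_simps)
qed

lemma integral_cnj_M_mult_M_reflected:
  assumes R: "R \<noteq> RA" and N: "N \<ge> 1" "R = RD \<Longrightarrow> N \<ge> 2" and r: "r > 0" and t: "0 < t" "t < ts"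
    and jk: "j \<in> {1..N}" "k \<in> {1..N}"
  shows "integral {0..pi * r} (\<lambda>x. cnj (M R N r j x (ts - t)) * M R N r k x t)
           = (if j = k then (1 + (if Jfun R j = 0 then 1 else 0) + (if 2 * Jfun R j = Ncal R N then 1 else 0))
                 * (2 * pi * r * theta2 (of_real (Ncal R N * Jfun R j) * tauf r ts) ((of_real (Ncal R N))\<^sup>2 * tauf r ts))
              else 0)"
proof -
  define n where "n = Ncal R N"
  define s where "s = refl_sign (sharp R)"
  define J where "J = Jfun R j"
  define c where "c i t' = M_coeff R N r i t'" for i t'
  have n: "n > 0" "n \<in> \<int>"
    using N Ncal_pos Ncal_Ints by (auto simp: n_def)
  have t': "ts - t > 0"
    using t by simp
  have M: "M R N r i x t' = (\<Sum>\<^sub>\<infinity>m. c i t' m * wave s (freq n (Jfun R i) m * x / r))" if "t' > 0" for i x t'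
    using M_eq_infsum[of R N r t' i x] n r that by (simp add: n_def s_def c_def)
  have "s\<^sup>2 = 1"
    using refl_sign_sharp_squared[OF R] by (simp add: s_def)
  moreover have "Jfun R k - J \<in> \<int>" and "2 * J \<in> \<int>"
    by (simp_all add: J_def Jfun_diff two_Jfun_Ints)
  moreover have "0 \<le> J" "2 * J \<le> n" "0 \<le> Jfun R k" "2 * Jfun R k \<le> n"
    using Jfun_reflected_bounds[OF R N(2) jk(1)] Jfun_reflected_bounds[OF R N(2) jk(2)]
    by (simp_all add: J_def n_def)
  moreover have "c i t' summable_on UNIV" if "t' > 0" for i t'
    unfolding c_def using n r that by (intro summable_M_coeff) (simp_all add: n_def)
  ultimately have "integral {0..pi * r} (\<lambda>x. cnj (M R N r j x (ts - t)) * M R N r k x t)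
      = (if J = Jfun R k then 2 * pi * r * ((\<Sum>\<^sub>\<infinity>m. cnj (c j (ts - t) m) * c k t m)
           + s * ((if J = 0 then \<Sum>\<^sub>\<infinity>m. cnj (c j (ts - t) m) * c k t (1 - m) else 0)
                  + (if 2 * J = n then \<Sum>\<^sub>\<infinity>m. cnj (c j (ts - t) m) * c k t (- m) else 0)))
         else 0)"
    unfolding M[OF t'] M[OF t(1)] J_def[symmetric]
    using t t' by (intro integral_cnj_wave_series_mult r n) auto
  also have "\<dots> = (if j = k then (1 + (if J = 0 then 1 else 0) + (if 2 * J = n then 1 else 0))
      * (2 * pi * r * theta2 (of_real (n * J) * tauf r ts) ((of_real n)\<^sup>2 * tauf r ts)) else 0)"
  proof (cases "j = k")
    case True
    show ?thesis
      using infsum_cnj_M_coeff_reflections[OF R N r t jk(1)]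
      unfolding True[symmetric] c_def s_def J_def n_def by (simp only: simp_thms if_True mult.left_commute)
  next
    case False
    then have "J \<noteq> Jfun R k"
      using Jfun_diff[of R k j] by (auto simp: J_def)
    with False show ?thesis
      by (simp only: if_False)
  qed
  finally show ?thesis
    by (simp only: n_def J_def)
qed

lemma mconst_eq:
  "mconst R N r j ts = (if R \<in> {RB, RBv, RD} \<and> j = 1 \<or> R = RD \<and> j = N then 2 else 1)
           * (2 * pi * r * theta2 (of_real (Ncal R N * Jfun R j) * tauf r ts) ((of_real (Ncal R N))\<^sup>2 * tauf r ts))"
  by (cases R) (auto simp: mconst_def Let_def)

theorem lemma2p1:
  fixes R :: rtype and N :: nat and r ts t :: real and j k :: nat
  assumes "N \<ge> 1" and "R = RD \<Longrightarrow> N \<ge> 2"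
    and "r > 0" and "ts > 0" and "0 < t" and "t < ts"
    and "j \<in> {1..N}" and "k \<in> {1..N}"
  shows "integral {0..Lint R r} (\<lambda>x. cnj (M R N r j x (ts - t)) * M R N r k x t)
           = mconst R N r j ts * (if j = k then 1 else 0)"
proof (cases "R = RA")
  case True
  then show ?thesis
    using integral_cnj_M_mult_M_RA[OF assms(1,3,5,6,7,8)] by (simp only: mconst_eq Lint_def) simp
next
  case False
  have "(1::complex) + (if Jfun R j = 0 then 1 else 0) + (if 2 * Jfun R j = Ncal R N then 1 else 0)
      = (if R \<in> {RB, RBv, RD} \<and> j = 1 \<or> R = RD \<and> j = N then 2 else 1)"
  proof -
    have "\<not> (R = RD \<and> j = 1 \<and> j = N)"
      using assms(2) by auto
    moreover have "1 \<le> j" "j \<le> N"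
      using assms(7) by auto
    ultimately show ?thesis
      by (simp only: Jfun_eq_0_iff[OF False] two_Jfun_eq_Ncal_iff[OF False]) auto
  qed
  then show ?thesis
    using integral_cnj_M_mult_M_reflected[OF False assms(1,2,3,5,6,7,8)] False
    by (simp only: mconst_eq Lint_def if_False) simp
qed

end
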